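(* Let $\Lambda$ be a positive definite diagonal $n\times n$ matrix, $N\ge2$, and let $Q_0,\dots,Q_N\in SO(n)$, $P_0,\dots,P_N\in\mathbb{R}^{n\times n}$, $U_0,\dots,U_{N-1}\in SO(n)$ satisfy the symmetric representation of the discrete rigid body equations: for $k=0,\dots,N-1$, $$Q_{k+1}=Q_kU_k,\qquad P_{k+1}=P_kU_k,\qquad U_k\Lambda-\Lambda U_k^T=Q_k^TP_k-P_k^TQ_k.$$ For $k=1,\dots,N$ define $\Omega_k:=Q_k^TQ_{k-1}$ and $M_k:=Q_{k-1}^TP_{k-1}-P_{k-1}^TQ_{k-1}$. Then $(Q_k,\Omega_k,M_k)$ satisfy the Moser–Veselov discrete rigid body equations: $$M_k=\Omega_k^T\Lambda-\Lambda\Omega_k\quad(k=1,\dots,N),\qquad M_{k+1}=\Omega_kM_k\Omega_k^T\quad(k=1,\dots,N-1).$$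
   Context: $SO(n)$ is the group of real orthogonal $n\times n$ matrices of determinant $1$; $A^T$ is the transpose. *)

theory Defs
  imports "HOL-Analysis.Analysis"
begin

definition SO :: "(real^'n^'n) set" where
  "SO = {A. orthogonal_matrix A \<and> det A = 1}"

definition pos_diag :: "real^'n^'n \<Rightarrow> bool" where
  "pos_diag L \<longleftrightarrow> (\<forall>i j. i \<noteq> j \<longrightarrow> L $ i $ j = 0) \<and> (\<forall>i. L $ i $ i > 0)"

end

theory Submission
  imports Defs
begin

text \<open>
  With \<open>Q\<^sub>k\<^sub>+\<^sub>1 = Q\<^sub>k U\<^sub>k\<close> and \<open>Q\<^sub>k\<close> orthogonal, \<open>\<Omega>\<^sub>k\<^sub>+\<^sub>1 = Q\<^sub>k\<^sub>+\<^sub>1\<^sup>T Q\<^sub>k = U\<^sub>k\<^sup>T\<close>, so the symmetric equation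
  \<open>U\<^sub>k \<Lambda> - \<Lambda> U\<^sub>k\<^sup>T = M\<^sub>k\<^sub>+\<^sub>1\<close> is the first Moser-Veselov equation. Since \<open>Q\<close> and \<open>P\<close>
  are both updated by right multiplication with \<open>U\<^sub>k\<close>, the skew matrix \<open>Q\<^sup>T P - P\<^sup>T Q\<close> is
  conjugated by \<open>U\<^sub>k\<close>, which is the second equation.
\<close>

lemma matrix_mul_diff_distrib_left:
  fixes A :: "real^'n^'m" and B C :: "real^'k^'n"
  shows "A ** (B - C) = A ** B - A ** C"
  by (simp add: matrix_matrix_mult_def sum_subtractf right_diff_distrib vec_eq_iff)

lemma matrix_mul_diff_distrib_right:
  fixes B C :: "real^'n^'m" and A :: "real^'k^'n"
  shows "(B - C) ** A = B ** A - C ** A"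
  by (simp add: matrix_matrix_mult_def sum_subtractf left_diff_distrib vec_eq_iff)

lemma transpose_mul_orthogonal_left:
  fixes Q U :: "real^'n^'n"
  assumes "orthogonal_matrix Q"
  shows "transpose (Q ** U) ** Q = transpose U"
proof -
  have "transpose Q ** Q = mat 1"
    using assms by (simp add: orthogonal_matrix)
  then show ?thesis
    by (metis matrix_transpose_mul matrix_mul_assoc matrix_mul_rid)
qed

lemma skew_product_mul_right:
  fixes A B :: "real^'n^'m" and U :: "real^'k^'n"
  shows "transpose (A ** U) ** (B ** U) - transpose (B ** U) ** (A ** U)
       = transpose U ** (transpose A ** B - transpose B ** A) ** U"
  by (simp add: matrix_transpose_mul matrix_mul_assoc
      matrix_mul_diff_distrib_left matrix_mul_diff_distrib_right)

theorem mainTheorem6: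
  fixes L :: "real^'n^'n"
    and Q P U :: "nat \<Rightarrow> real^'n^'n"
    and N :: nat
  assumes "pos_diag L"
    and "N \<ge> 2"
    and "\<And>k. k \<le> N \<Longrightarrow> Q k \<in> SO"
    and "\<And>k. k < N \<Longrightarrow> U k \<in> SO"
    and "\<And>k. k < N \<Longrightarrow> Q (Suc k) = Q k ** U k"
    and "\<And>k. k < N \<Longrightarrow> P (Suc k) = P k ** U k"
    and "\<And>k. k < N \<Longrightarrow>
           U k ** L - L ** transpose (U k) = transpose (Q k) ** P k - transpose (P k) ** Q k"
  defines "Omega \<equiv> (\<lambda>k. transpose (Q k) ** Q (k - 1))"
    and "M \<equiv> (\<lambda>k. transpose (Q (k - 1)) ** P (k - 1) - transpose (P (k - 1)) ** Q (k - 1))"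
  shows "(\<forall>k. 1 \<le> k \<and> k \<le> N \<longrightarrow> M k = transpose (Omega k) ** L - L ** Omega k)
       \<and> (\<forall>k. 1 \<le> k \<and> k \<le> N - 1 \<longrightarrow> M (Suc k) = Omega k ** M k ** transpose (Omega k))"
proof -
  have Omega_Suc: "Omega (Suc j) = transpose (U j)" if "j < N" for j
    using that assms(3,5) transpose_mul_orthogonal_left[of "Q j" "U j"]
    by (simp add: Omega_def SO_def)
  have M_Suc: "M (Suc j) = transpose (Q j) ** P j - transpose (P j) ** Q j" for j
    by (simp add: M_def)
  show ?thesis
  proof (intro conjI allI impI)
    fix k assume "1 \<le> k \<and> k \<le> N"
    then obtain j where "k = Suc j" "j < N" by (cases k) auto
    then show "M k = transpose (Omega k) ** L - L ** Omega k"
      using Omega_Suc[of j] assms(7)[of j] by (simp add: M_Suc)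
  next
    fix k assume "1 \<le> k \<and> k \<le> N - 1"
    then obtain j where j: "k = Suc j" "k < N" by (cases k) auto
    have "M (Suc k) = transpose (U j) ** M k ** U j"
      using j assms(5,6)[of j] skew_product_mul_right[of "Q j" "U j" "P j"]
      by (simp add: M_Suc)
    then show "M (Suc k) = Omega k ** M k ** transpose (Omega k)"
      using j Omega_Suc[of j] by simp
  qed
qed

end
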